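(* Let $X$ be a compact metric space, $A$ a unital simple $C^*$-algebra and $\phi:C(X)\to A$ a unital injective $*$-homomorphism. Let $G\subset X$ be open and suppose $\mu_\tau(\overline G\setminus G)=0$ for all $\tau\in T(A)$. Then $\tau\mapsto \tau(\phi(\chi_G))$ (with $\phi$ extended to bounded Borel functions with values in $A^{**}$) is continuous on $T(A)$; equivalently, for any $\varepsilon>0$ there exists $f\in C(X)$ with $0\le f\le 1$ and $f(t)=0$ for $t\in X\setminus G$ such that $|\tau(\phi(f))-\mu_\tau(G)|<\varepsilon$ for all $\tau\in T(A)$.
   Context: $T(A)$ is the tracial state space of $A$. For $\tau\in T(A)$, $\mu_\tau$ is the Borel probability measure on $X$ induced by the positive functional $\tau\circ\phi$ on $C(X)$. $\phi$ extends to a homomorphism from the algebra of bounded Borel functions on $X$ into the enveloping von Neumann algebra $A^{**}$, and tracial states extend normally to $A^{**}$. *)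

theory Defs
  imports "HOL-Analysis.Analysis"
begin

text \<open>A unital C*-algebra structure on a real Banach algebra with unit (norm 1 = 1):
  sc is complex scalar multiplication (extending scaleR), st the involution.\<close>
definition cstar_alg :: "(complex \<Rightarrow> 'a::{banach,real_normed_algebra_1} \<Rightarrow> 'a) \<Rightarrow> ('a \<Rightarrow> 'a) \<Rightarrow> bool" where
  "cstar_alg sc st \<longleftrightarrow>
     (\<forall>r x. sc (of_real r) x = scaleR r x) \<and>
     (\<forall>c d x. sc (c + d) x = sc c x + sc d x) \<and>
     (\<forall>c x y. sc c (x + y) = sc c x + sc c y) \<and>
     (\<forall>c d x. sc (c * d) x = sc c (sc d x)) \<and>
     (\<forall>c x y. sc c (x * y) = sc c x * y \<and> sc c (x * y) = x * sc c y) \<and>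
     (\<forall>c x. norm (sc c x) = cmod c * norm x) \<and>
     (\<forall>x y. st (x + y) = st x + st y) \<and>
     (\<forall>c x. st (sc c x) = sc (cnj c) (st x)) \<and>
     (\<forall>x y. st (x * y) = st y * st x) \<and>
     (\<forall>x. st (st x) = x) \<and>
     (\<forall>x. norm (st x * x) = (norm x)^2)"

definition closed_ideal :: "(complex \<Rightarrow> 'a::{banach,real_normed_algebra_1} \<Rightarrow> 'a) \<Rightarrow> 'a set \<Rightarrow> bool" where
  "closed_ideal sc I \<longleftrightarrow> 0 \<in> I \<and> closed I \<and> (\<forall>x\<in>I. \<forall>y\<in>I. x + y \<in> I) \<and>
     (\<forall>c. \<forall>x\<in>I. sc c x \<in> I) \<and> (\<forall>a. \<forall>x\<in>I. a * x \<in> I \<and> x * a \<in> I)"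

definition cstar_simple :: "(complex \<Rightarrow> 'a::{banach,real_normed_algebra_1} \<Rightarrow> 'a) \<Rightarrow> bool" where
  "cstar_simple sc \<longleftrightarrow> (\<forall>I. closed_ideal sc I \<longrightarrow> I = {0} \<or> I = UNIV)"

definition cpos :: "('a::{banach,real_normed_algebra_1} \<Rightarrow> 'a) \<Rightarrow> 'a \<Rightarrow> bool" where
  "cpos st x \<longleftrightarrow> (\<exists>b. x = st b * b)"

definition tracial_state :: "(complex \<Rightarrow> 'a::{banach,real_normed_algebra_1} \<Rightarrow> 'a) \<Rightarrow> ('a \<Rightarrow> 'a) \<Rightarrow> ('a \<Rightarrow> complex) \<Rightarrow> bool" where
  "tracial_state sc st \<tau> \<longleftrightarrow>
     (\<forall>x y. \<tau> (x + y) = \<tau> x + \<tau> y) \<and> (\<forall>c x. \<tau> (sc c x) = c * \<tau> x) \<and>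
     (\<forall>x. cpos st x \<longrightarrow> Im (\<tau> x) = 0 \<and> Re (\<tau> x) \<ge> 0) \<and>
     \<tau> 1 = 1 \<and> (\<forall>x y. \<tau> (x * y) = \<tau> (y * x))"

definition traces :: "(complex \<Rightarrow> 'a::{banach,real_normed_algebra_1} \<Rightarrow> 'a) \<Rightarrow> ('a \<Rightarrow> 'a) \<Rightarrow> ('a \<Rightarrow> complex) set" where
  "traces sc st = {\<tau>. tracial_state sc st \<tau>}"

definition weakstar_traces :: "(complex \<Rightarrow> 'a::{banach,real_normed_algebra_1} \<Rightarrow> 'a) \<Rightarrow> ('a \<Rightarrow> 'a) \<Rightarrow> ('a \<Rightarrow> complex) topology" where
  "weakstar_traces sc st = subtopology (product_topology (\<lambda>_. euclidean) UNIV) (traces sc st)"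

text \<open>Unital injective *-homomorphism C(X) -> A (only its values on continuous functions matter).\<close>
definition unital_inj_star_hom ::
  "(complex \<Rightarrow> 'a::{banach,real_normed_algebra_1} \<Rightarrow> 'a) \<Rightarrow> ('a \<Rightarrow> 'a) \<Rightarrow> (('x::topological_space \<Rightarrow> complex) \<Rightarrow> 'a) \<Rightarrow> bool" where
  "unital_inj_star_hom sc st \<phi> \<longleftrightarrow>
     (\<forall>f g. continuous_on UNIV f \<longrightarrow> continuous_on UNIV g \<longrightarrow>
        \<phi> (\<lambda>t. f t + g t) = \<phi> f + \<phi> g \<and> \<phi> (\<lambda>t. f t * g t) = \<phi> f * \<phi> g) \<and>
     (\<forall>c f. continuous_on UNIV f \<longrightarrow> \<phi> (\<lambda>t. c * f t) = sc c (\<phi> f)) \<and>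
     (\<forall>f. continuous_on UNIV f \<longrightarrow> \<phi> (\<lambda>t. cnj (f t)) = st (\<phi> f)) \<and>
     \<phi> (\<lambda>t. 1) = 1 \<and>
     inj_on \<phi> {f. continuous_on UNIV f}"

definition represents :: "(('x::topological_space \<Rightarrow> complex) \<Rightarrow> 'a) \<Rightarrow> ('a \<Rightarrow> complex) \<Rightarrow> 'x measure \<Rightarrow> bool" where
  "represents \<phi> \<tau> M \<longleftrightarrow> finite_measure M \<and> sets M = sets borel \<and>
     (\<forall>f. continuous_on UNIV f \<longrightarrow> integral\<^sup>L M f = \<tau> (\<phi> f))"

end

(* A tracial state is bounded, |tau x| <= 2 norm x: for self-adjoint h of norm < 1 both 1 - h and
   1 + h are positive, their square roots being given by the binomial series. Hence T(A) is weak-*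
   compact by Tychonoff. For open U, tau |-> mu_tau U is the supremum of the weak-* continuous maps
   tau |-> tau (phi f_n), where the continuous cutoffs f_n increase to the indicator of U, so it is
   lower semicontinuous; as mu_tau G = 1 - mu_tau (X - closure G) by the boundary hypothesis, it is
   also upper semicontinuous. Dini's theorem on the compact space T(A) then makes the convergence
   of tau (phi f_n) to mu_tau G uniform. *)
theory Submission
  imports Defs "HOL-Probability.Probability_Measure"
begin

lemma abs_gbinomial_half_le_1: "\<bar>(1/2::real) gchoose n\<bar> \<le> 1"
proof (induction n)
  case (Suc n)
  have "real (Suc n) * ((1/2::real) gchoose Suc n) = (1/2 - real n) * ((1/2) gchoose n)"
    using gbinomial_mult_1[of "1/2::real" n] by (simp add: algebra_simps)
  then have "real (Suc n) * \<bar>(1/2::real) gchoose Suc n\<bar> = \<bar>1/2 - real n\<bar> * \<bar>(1/2) gchoose n\<bar>"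
    by (metis abs_mult abs_of_nat)
  also have "\<dots> \<le> real (Suc n) * 1"
    using Suc.IH by (intro mult_mono) auto
  finally show ?case by simp
qed simp

lemma binomial_sqrt_series:
  fixes h :: "'a::{banach,real_normed_algebra_1}"
  defines "u \<equiv> \<lambda>n. ((1/2::real) gchoose n) *\<^sub>R (-h) ^ n"
  assumes "norm h < 1"
  shows "summable (\<lambda>n. norm (u n))" and "suminf u * suminf u = 1 - h"
proof -
  have "norm (u n) \<le> norm h ^ n" for n
  proof -
    have "norm (u n) \<le> 1 * norm (-h) ^ n"
      unfolding u_def norm_scaleR
      using abs_gbinomial_half_le_1 by (intro mult_mono norm_power_ineq) auto
    then show ?thesis by simp
  qed
  then show summable: "summable (\<lambda>n. norm (u n))"
    using assms(2) by (intro summable_comparison_test[OF _ summable_geometric]) auto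
  have coeff: "(\<Sum>i\<le>k. u i * u (k - i)) = (if k = 0 then 1 else if k = 1 then -h else 0)" for k
  proof -
    have "(\<Sum>i\<le>k. u i * u (k - i)) = (\<Sum>i\<le>k. ((1/2::real) gchoose i) * ((1/2) gchoose (k - i))) *\<^sub>R (-h) ^ k"
      unfolding scaleR_sum_left
      by (intro sum.cong refl) (simp add: u_def power_add[symmetric])
    also have "(\<Sum>i\<le>k. ((1/2::real) gchoose i) * ((1/2) gchoose (k - i))) = (1::real) gchoose k"
      using gbinomial_Vandermonde[of "1/2::real" "1/2" k] by (simp add: atLeast0AtMost)
    also have "(1::real) gchoose k = of_nat (1 choose k)"
      by (simp add: binomial_gbinomial)
    finally show ?thesis
      by (cases k) (auto simp: binomial_eq_0)
  qed
  have "(\<lambda>k. if k = 0 then 1 else if k = 1 then -h else 0) sums (1 - h)"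
    using sums_finite[of "{0, 1}" "\<lambda>k. if k = 0 then 1 else if k = 1 then -h else 0"] by simp
  then have "(\<lambda>k. \<Sum>i\<le>k. u i * u (k - i)) sums (1 - h)"
    by (simp only: coeff)
  then show "suminf u * suminf u = 1 - h"
    by (rule sums_unique2[OF Cauchy_product_sums[OF summable summable]])
qed

locale cstar_algebra =
  fixes sc :: "complex \<Rightarrow> 'a::{banach,real_normed_algebra_1} \<Rightarrow> 'a" and st :: "'a \<Rightarrow> 'a"
  assumes cstar_alg: "cstar_alg sc st"
begin

lemma sc_of_real: "sc (of_real r) x = r *\<^sub>R x"
  and sc_add_left: "sc (c + d) x = sc c x + sc d x"
  and sc_add_right: "sc c (x + y) = sc c x + sc c y"
  and sc_mult: "sc (c * d) x = sc c (sc d x)"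
  and norm_sc: "norm (sc c x) = cmod c * norm x"
  and st_add: "st (x + y) = st x + st y"
  and st_sc: "st (sc c x) = sc (cnj c) (st x)"
  and st_mult: "st (x * y) = st y * st x"
  and st_st [simp]: "st (st x) = x"
  and norm_st_mult_self: "norm (st x * x) = (norm x)\<^sup>2"
  using cstar_alg[unfolded cstar_alg_def] by simp_all

lemma sc_minus_left: "sc (- c) x = - sc c x"
  using sc_add_left[of c "- c" x] sc_of_real[of 0 x] by (simp add: add_eq_0_iff2)

lemma bounded_linear_sc: "bounded_linear (sc c)"
proof (rule bounded_linear_intro[where K = "cmod c"])
  show "sc c (r *\<^sub>R x) = r *\<^sub>R sc c x" for r x
    by (metis mult.commute sc_mult sc_of_real)
qed (simp_all add: sc_add_right norm_sc)

lemma norm_st_le: "norm (st x) \<le> norm x"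
proof -
  have "norm (st x) * norm (st x) = norm (x * st x)"
    using norm_st_mult_self[of "st x"] by (simp add: power2_eq_square)
  also have "\<dots> \<le> norm x * norm (st x)"
    by (rule norm_mult_ineq)
  finally show ?thesis
    by (cases "norm (st x) = 0") (auto simp: mult_le_cancel_right)
qed

sublocale st: bounded_linear st
proof (rule bounded_linear_intro[where K = 1])
  show "st (r *\<^sub>R x) = r *\<^sub>R st x" for r x
    by (metis sc_of_real st_sc complex_cnj_complex_of_real)
qed (simp_all add: st_add norm_st_le)

lemma st_one [simp]: "st 1 = 1"
  by (metis st_mult st_st mult_1_left mult_1_right)

lemma st_power: "st (x ^ n) = st x ^ n"
  by (induction n) (simp_all add: st_mult power_commutes)

lemma cpos_one_minus:
  assumes "st h = h" and "norm h < 1"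
  shows "cpos st (1 - h)"
proof -
  define u where "u = (\<lambda>n. ((1/2::real) gchoose n) *\<^sub>R (-h) ^ n)"
  have "summable u"
    unfolding u_def using binomial_sqrt_series(1)[OF assms(2)] by (rule summable_norm_cancel)
  then have "st (suminf u) = (\<Sum>n. st (u n))"
    by (rule st.suminf)
  also have "(\<lambda>n. st (u n)) = u"
    by (simp add: u_def st.scaleR st.neg st_power assms(1))
  finally have "1 - h = st (suminf u) * suminf u"
    using binomial_sqrt_series(2)[OF assms(2)] by (simp add: u_def)
  then show ?thesis
    unfolding cpos_def by blast
qed

end

lemma tracial_stateD:
  assumes "tracial_state sc st \<tau>"
  shows trace_add: "\<tau> (x + y) = \<tau> x + \<tau> y"
    and trace_sc: "\<tau> (sc c x) = c * \<tau> x"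
    and trace_cpos: "cpos st x \<Longrightarrow> Im (\<tau> x) = 0 \<and> 0 \<le> Re (\<tau> x)"
    and trace_one: "\<tau> 1 = 1"
  using assms[unfolded tracial_state_def] by simp_all

lemma additive_trace: "tracial_state sc st \<tau> \<Longrightarrow> Modules.additive \<tau>"
  by (rule additive.intro) (rule trace_add)

lemma closed_traces: "closed (traces sc st)"
proof -
  have "closed {\<tau>::'a \<Rightarrow> complex. cpos st x \<longrightarrow> Im (\<tau> x) = 0 \<and> 0 \<le> Re (\<tau> x)}" for x
    by (cases "cpos st x")
      (simp_all add: closed_Collect_conj closed_Collect_eq closed_Collect_le continuous_intros
        continuous_on_product_then_coordinatewise)
  then show ?thesis
    unfolding traces_def tracial_state_def
    by (intro closed_Collect_conj closed_Collect_all closed_Collect_eq) (simp_all add: continuous_intros)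
qed

lemma weakstar_traces_eq: "weakstar_traces sc st = top_of_set (traces sc st)"
  by (simp add: weakstar_traces_def euclidean_product_topology)

context cstar_algebra
begin

lemma trace_selfadjoint_le_1:
  assumes "tracial_state sc st \<tau>" and "st h = h" and "norm h < 1"
  shows "cmod (\<tau> h) \<le> 1"
proof -
  interpret additive \<tau>
    using assms(1) by (rule additive_trace)
  have "cpos st (1 - h)" "cpos st (1 + h)"
    using cpos_one_minus[of h] cpos_one_minus[of "- h"] assms(2,3) by (simp_all add: st.neg)
  then have "Im (\<tau> (1 - h)) = 0 \<and> 0 \<le> Re (\<tau> (1 - h))" "Im (\<tau> (1 + h)) = 0 \<and> 0 \<le> Re (\<tau> (1 + h))"
    using trace_cpos[OF assms(1)] by blast+
  moreover have "\<tau> (1 - h) = 1 - \<tau> h" "\<tau> (1 + h) = 1 + \<tau> h"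
    by (simp_all add: diff add trace_one[OF assms(1)])
  ultimately show ?thesis
    by (simp add: cmod_def abs_le_iff)
qed

lemma trace_selfadjoint_norm_le:
  assumes "tracial_state sc st \<tau>" and "st h = h"
  shows "cmod (\<tau> h) \<le> norm h"
proof (rule dense_ge)
  fix r assume r: "norm h < r"
  then have "r > 0"
    using norm_ge_zero order.strict_trans1 by blast
  have "cmod (\<tau> ((1 / r) *\<^sub>R h)) \<le> 1"
    using assms r \<open>r > 0\<close> by (intro trace_selfadjoint_le_1) (simp_all add: st.scaleR)
  then show "cmod (\<tau> h) \<le> r"
    using \<open>r > 0\<close>
    by (simp add: trace_sc[OF assms(1), of "of_real (1 / r)", unfolded sc_of_real] norm_divide divide_le_eq)
qed

lemma trace_norm_le:
  assumes "tracial_state sc st \<tau>"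
  shows "cmod (\<tau> x) \<le> 2 * norm x"
proof -
  define h where "h = (1/2) *\<^sub>R (x + st x)"
  define y where "y = (1/2) *\<^sub>R (x - st x)"
  define k where "k = sc (- \<i>) y"
  have "st h = h"
    by (simp add: h_def st.scaleR st.add add.commute)
  interpret sc_i: bounded_linear "sc \<i>"
    by (rule bounded_linear_sc)
  have "st y = - y"
    by (simp add: y_def st.scaleR st.diff scaleR_diff_right)
  then have "st k = k"
    unfolding k_def st_sc by (simp add: sc_i.neg sc_minus_left)
  have "sc \<i> k = y"
    by (simp add: k_def flip: sc_mult) (metis of_real_1 sc_of_real scaleR_one)
  have "x = h + sc \<i> k"
    by (simp add: \<open>sc \<i> k = y\<close> h_def y_def scaleR_add_right scaleR_diff_right flip: scaleR_add_left)
  then have "cmod (\<tau> x) \<le> cmod (\<tau> h) + cmod (\<tau> k)"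
    using norm_triangle_ineq[of "\<tau> h" "\<i> * \<tau> k"]
    by (simp add: trace_add[OF assms] trace_sc[OF assms] norm_mult)
  also have "\<dots> \<le> norm h + norm y"
    using trace_selfadjoint_norm_le[OF assms \<open>st h = h\<close>] trace_selfadjoint_norm_le[OF assms \<open>st k = k\<close>]
    by (simp add: k_def norm_sc)
  also have "\<dots> \<le> 2 * norm x"
    using norm_triangle_ineq[of x "st x"] norm_triangle_ineq4[of x "st x"] norm_st_le[of x]
    by (simp add: h_def y_def)
  finally show ?thesis .
qed

lemma compact_traces: "compact (traces sc st)"
proof -
  have "compact (PiE UNIV (\<lambda>x. cball 0 (2 * norm x)) :: ('a \<Rightarrow> complex) set)"
    using compactin_PiE[of "\<lambda>_. euclidean" UNIV "\<lambda>x. cball 0 (2 * norm x)"]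
    by (auto simp: euclidean_product_topology compactin_euclidean_iff)
  moreover have "traces sc st \<subseteq> PiE UNIV (\<lambda>x. cball 0 (2 * norm x))"
    using trace_norm_le by (auto simp: traces_def)
  ultimately show ?thesis
    using compact_Int_closed[OF _ closed_traces] by (metis inf.absorb_iff2)
qed

end

lemma Dini_uniform:
  fixes g :: "nat \<Rightarrow> 'b::topological_space \<Rightarrow> real"
  assumes "compact T" and "\<And>n. continuous_on T (g n)" and "continuous_on T h"
    and "\<And>\<tau>. \<tau> \<in> T \<Longrightarrow> incseq (\<lambda>n. g n \<tau>)" and "\<And>\<tau>. \<tau> \<in> T \<Longrightarrow> (\<lambda>n. g n \<tau>) \<longlonglongrightarrow> h \<tau>"
    and "0 < \<epsilon>"
  obtains n where "\<And>\<tau>. \<tau> \<in> T \<Longrightarrow> h \<tau> - g n \<tau> < \<epsilon>"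
proof -
  define V where "V n = T \<inter> (\<lambda>\<tau>. h \<tau> - g n \<tau>) -` {..<\<epsilon>}" for n
  have "\<forall>c\<in>range V. openin (top_of_set T) c"
    unfolding V_def using assms(2,3) by (auto intro!: continuous_openin_preimage_gen continuous_on_diff)
  moreover have "T \<subseteq> \<Union> (range V)"
  proof
    fix \<tau> assume "\<tau> \<in> T"
    then have "(\<lambda>n. h \<tau> - g n \<tau>) \<longlonglongrightarrow> 0"
      using tendsto_diff[OF tendsto_const assms(5)[OF \<open>\<tau> \<in> T\<close>], of "h \<tau>"] by simp
    then have "eventually (\<lambda>n. h \<tau> - g n \<tau> < \<epsilon>) sequentially"
      using assms(6) by (rule order_tendstoD(2))
    then obtain n where "h \<tau> - g n \<tau> < \<epsilon>"
      unfolding eventually_sequentially by blast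
    then show "\<tau> \<in> \<Union> (range V)"
      using \<open>\<tau> \<in> T\<close> by (auto simp: V_def)
  qed
  ultimately obtain D where "D \<subseteq> range V" "finite D" "T \<subseteq> \<Union> D"
    using compact_eq_openin_cover[THEN iffD1, rule_format, OF assms(1), of "range V"] by blast
  then obtain N where N: "finite N" "T \<subseteq> \<Union> (V ` N)"
    by (metis finite_subset_image)
  have "V m \<subseteq> V (Max (insert 0 N))" if "m \<in> N" for m
  proof -
    have "m \<le> Max (insert 0 N)"
      using N(1) that by simp
    then show ?thesis
      using assms(4) by (fastforce simp: V_def incseq_def)
  qed
  then have "T \<subseteq> V (Max (insert 0 N))"
    using N(2) by blast
  then show thesis
    by (intro that) (auto simp: V_def)
qed

(* Since infdist t {} = 0, the case U = UNIV is treated separately. *)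
definition open_cutoff :: "'x::metric_space set \<Rightarrow> nat \<Rightarrow> 'x \<Rightarrow> real" where
  "open_cutoff U n t = min 1 (real n * (if U = UNIV then 1 else infdist t (- U)))"

lemma continuous_on_open_cutoff: "continuous_on S (open_cutoff U n)"
  unfolding open_cutoff_def by (cases "U = UNIV") (auto intro!: continuous_intros)

lemma open_cutoff_nonneg: "0 \<le> open_cutoff U n t"
  by (simp add: open_cutoff_def infdist_nonneg)

lemma open_cutoff_le_1: "open_cutoff U n t \<le> 1"
  by (simp add: open_cutoff_def)

lemma open_cutoff_eq_0: "t \<notin> U \<Longrightarrow> open_cutoff U n t = 0"
  by (auto simp: open_cutoff_def infdist_zero)

lemma open_cutoff_le_indicator: "open_cutoff U n t \<le> indicator U t"
  by (simp add: indicator_def open_cutoff_le_1 open_cutoff_eq_0)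

lemma incseq_open_cutoff: "incseq (\<lambda>n. open_cutoff U n t)"
  unfolding open_cutoff_def
  by (intro incseq_SucI min.mono order_refl mult_right_mono) (simp_all add: infdist_nonneg)

lemma open_cutoff_tendsto:
  assumes "open U"
  shows "(\<lambda>n. open_cutoff U n t) \<longlonglongrightarrow> indicator U t"
proof (cases "t \<in> U")
  case True
  define d where "d = (if U = UNIV then 1 else infdist t (- U))"
  have "d > 0"
    using True assms by (auto simp: d_def intro!: infdist_pos_not_in_closed)
  have "open_cutoff U n t = 1" if "nat \<lceil>1 / d\<rceil> \<le> n" for n
  proof -
    have "1 \<le> real n * d"
      using that \<open>d > 0\<close> by (simp add: divide_le_eq mult.commute flip: nat_le_real_less)
    then show ?thesis
      by (simp add: open_cutoff_def d_def)
  qed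
  then have "eventually (\<lambda>n. open_cutoff U n t = 1) sequentially"
    unfolding eventually_sequentially by blast
  then show ?thesis
    using True tendsto_eventually by fastforce
qed (auto simp: open_cutoff_def infdist_zero)

locale weakly_continuous_family =
  fixes T :: "'b::topological_space set" and M :: "'b \<Rightarrow> 'x::metric_space measure"
  assumes prob_space_M: "\<tau> \<in> T \<Longrightarrow> prob_space (M \<tau>)"
    and sets_M: "\<tau> \<in> T \<Longrightarrow> sets (M \<tau>) = sets borel"
    and continuous_on_integral:
      "continuous_on UNIV (g :: 'x \<Rightarrow> real) \<Longrightarrow> continuous_on T (\<lambda>\<tau>. integral\<^sup>L (M \<tau>) g)"
begin

lemma space_M: "\<tau> \<in> T \<Longrightarrow> space (M \<tau>) = UNIV"
  using sets_eq_imp_space_eq[OF sets_M] by simp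

lemma open_cutoff_integrable: "\<tau> \<in> T \<Longrightarrow> integrable (M \<tau>) (open_cutoff U n)"
proof -
  assume "\<tau> \<in> T"
  then interpret prob_space "M \<tau>"
    by (rule prob_space_M)
  have "open_cutoff U n \<in> borel_measurable (M \<tau>)"
    using borel_measurable_continuous_onI[OF continuous_on_open_cutoff]
    by (simp add: measurable_cong_sets[OF sets_M[OF \<open>\<tau> \<in> T\<close>] refl])
  then show ?thesis
    by (intro integrable_const_bound[where B = 1]) (simp_all add: open_cutoff_nonneg open_cutoff_le_1)
qed

lemma integral_open_cutoff_le:
  assumes "\<tau> \<in> T" and "open U"
  shows "integral\<^sup>L (M \<tau>) (open_cutoff U n) \<le> measure (M \<tau>) U"
proof -
  interpret prob_space "M \<tau>"
    using assms(1) by (rule prob_space_M)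
  have "U \<in> sets (M \<tau>)"
    using assms sets_M by simp
  then have "integral\<^sup>L (M \<tau>) (open_cutoff U n) \<le> integral\<^sup>L (M \<tau>) (indicator U)"
    by (intro integral_mono open_cutoff_integrable assms(1) open_cutoff_le_indicator)
      (simp add: integrable_indicator_iff less_top[symmetric])
  also have "\<dots> = measure (M \<tau>) U"
    using \<open>U \<in> sets (M \<tau>)\<close> by simp
  finally show ?thesis .
qed

lemma incseq_integral_open_cutoff: "\<tau> \<in> T \<Longrightarrow> incseq (\<lambda>n. integral\<^sup>L (M \<tau>) (open_cutoff U n))"
  using incseq_open_cutoff
  by (intro incseq_SucI integral_mono open_cutoff_integrable) (auto simp: incseq_Suc_iff)

lemma integral_open_cutoff_tendsto:
  assumes "\<tau> \<in> T" and "open U"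
  shows "(\<lambda>n. integral\<^sup>L (M \<tau>) (open_cutoff U n)) \<longlonglongrightarrow> measure (M \<tau>) U"
proof -
  interpret prob_space "M \<tau>"
    using assms(1) by (rule prob_space_M)
  have "U \<in> sets (M \<tau>)"
    using assms sets_M by simp
  have "(\<lambda>n. integral\<^sup>L (M \<tau>) (open_cutoff U n)) \<longlonglongrightarrow> integral\<^sup>L (M \<tau>) (indicator U)"
  proof (rule integral_dominated_convergence[where w = "\<lambda>_. 1"])
    show "\<And>n. open_cutoff U n \<in> borel_measurable (M \<tau>)"
      using open_cutoff_integrable[OF assms(1)] by blast
    show "AE t in M \<tau>. norm (open_cutoff U n t) \<le> 1" for n
      by (simp add: open_cutoff_nonneg open_cutoff_le_1)
    show "AE t in M \<tau>. (\<lambda>n. open_cutoff U n t) \<longlonglongrightarrow> indicator U t"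
      using open_cutoff_tendsto[OF assms(2)] by simp
  qed (use \<open>U \<in> sets (M \<tau>)\<close> in simp_all)
  then show ?thesis
    using \<open>U \<in> sets (M \<tau>)\<close> by simp
qed

lemma eventually_less_measure_open:
  assumes "open U" and "\<tau> \<in> T" and "a < measure (M \<tau>) U"
  shows "eventually (\<lambda>\<sigma>. a < measure (M \<sigma>) U) (at \<tau> within T)"
proof -
  obtain n where n: "a < integral\<^sup>L (M \<tau>) (open_cutoff U n)"
    using order_tendstoD(1)[OF integral_open_cutoff_tendsto[OF assms(2,1)] assms(3)]
    unfolding eventually_sequentially by blast
  have "((\<lambda>\<sigma>. integral\<^sup>L (M \<sigma>) (open_cutoff U n)) \<longlongrightarrow> integral\<^sup>L (M \<tau>) (open_cutoff U n)) (at \<tau> within T)"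
    using continuous_on_integral[OF continuous_on_open_cutoff] assms(2) by (simp add: continuous_on_def)
  then have "eventually (\<lambda>\<sigma>. a < integral\<^sup>L (M \<sigma>) (open_cutoff U n)) (at \<tau> within T)"
    using n by (rule order_tendstoD(1))
  moreover have "eventually (\<lambda>\<sigma>. \<sigma> \<in> T) (at \<tau> within T)"
    by (simp add: eventually_at_filter)
  ultimately show ?thesis
    by eventually_elim (meson integral_open_cutoff_le[OF _ assms(1)] less_le_trans)
qed

lemma measure_eq_compl_closure:
  assumes "\<tau> \<in> T" and "open G" and "measure (M \<tau>) (closure G - G) = 0"
  shows "measure (M \<tau>) G = 1 - measure (M \<tau>) (- closure G)"
proof -
  interpret prob_space "M \<tau>"
    using assms(1) by (rule prob_space_M)
  have "G \<in> sets (M \<tau>)" "closure G \<in> sets (M \<tau>)"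
    using assms(1,2) sets_M by auto
  then have "measure (M \<tau>) (closure G) = measure (M \<tau>) G"
    using finite_measure_Diff[OF _ _ closure_subset] assms(3) by simp
  moreover have "measure (M \<tau>) (- closure G) = 1 - measure (M \<tau>) (closure G)"
    using prob_compl[OF \<open>closure G \<in> sets (M \<tau>)\<close>] space_M[OF assms(1)] by (simp add: Compl_eq_Diff_UNIV)
  ultimately show ?thesis
    by simp
qed

lemma continuous_on_measure_null_boundary:
  assumes "open G" and "\<And>\<tau>. \<tau> \<in> T \<Longrightarrow> measure (M \<tau>) (closure G - G) = 0"
  shows "continuous_on T (\<lambda>\<tau>. measure (M \<tau>) G)"
  unfolding continuous_on_def
proof (intro ballI order_tendstoI)
  fix \<tau> a assume "\<tau> \<in> T"
  show "a < measure (M \<tau>) G \<Longrightarrow> eventually (\<lambda>\<sigma>. a < measure (M \<sigma>) G) (at \<tau> within T)"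
    using assms(1) \<open>\<tau> \<in> T\<close> by (rule eventually_less_measure_open)
  assume "measure (M \<tau>) G < a"
  then have "1 - a < measure (M \<tau>) (- closure G)"
    using measure_eq_compl_closure[OF \<open>\<tau> \<in> T\<close> assms(1) assms(2)[OF \<open>\<tau> \<in> T\<close>]] by simp
  then have "eventually (\<lambda>\<sigma>. 1 - a < measure (M \<sigma>) (- closure G)) (at \<tau> within T)"
    using \<open>\<tau> \<in> T\<close> by (intro eventually_less_measure_open) auto
  moreover have "eventually (\<lambda>\<sigma>. \<sigma> \<in> T) (at \<tau> within T)"
    by (simp add: eventually_at_filter)
  ultimately show "eventually (\<lambda>\<sigma>. measure (M \<sigma>) G < a) (at \<tau> within T)"
    by eventually_elim (use measure_eq_compl_closure assms in fastforce)
qed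

lemma uniform_approx_open_cutoff:
  assumes "compact T" and "open G" and "continuous_on T (\<lambda>\<tau>. measure (M \<tau>) G)" and "0 < \<epsilon>"
  obtains n where "\<And>\<tau>. \<tau> \<in> T \<Longrightarrow> measure (M \<tau>) G - integral\<^sup>L (M \<tau>) (open_cutoff G n) < \<epsilon>"
  using Dini_uniform[OF assms(1) continuous_on_integral[OF continuous_on_open_cutoff] assms(3)
      incseq_integral_open_cutoff integral_open_cutoff_tendsto[OF _ assms(2)] assms(4)]
  by blast

end

lemma represents_real:
  assumes "represents \<phi> \<tau> M" and "continuous_on UNIV g"
  shows "\<tau> (\<phi> (\<lambda>t. complex_of_real (g t))) = of_real (integral\<^sup>L M g)"
proof -
  have "continuous_on UNIV (\<lambda>t. complex_of_real (g t))"
    using assms(2) by (intro continuous_intros)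
  then have "integral\<^sup>L M (\<lambda>t. complex_of_real (g t)) = \<tau> (\<phi> (\<lambda>t. complex_of_real (g t)))"
    using assms(1) unfolding represents_def by blast
  then show ?thesis
    by simp
qed

lemma weakly_continuous_family_traces:
  fixes \<phi> :: "('x::metric_space \<Rightarrow> complex) \<Rightarrow> 'a::{banach,real_normed_algebra_1}"
  assumes "unital_inj_star_hom sc st \<phi>" and "\<forall>\<tau>\<in>traces sc st. represents \<phi> \<tau> (\<mu> \<tau>)"
  shows "weakly_continuous_family (traces sc st) \<mu>"
proof (rule weakly_continuous_family.intro)
  fix \<tau> assume \<tau>: "\<tau> \<in> traces sc st"
  then have rep: "represents \<phi> \<tau> (\<mu> \<tau>)"
    using assms(2) by blast
  then interpret finite_measure "\<mu> \<tau>"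
    by (simp add: represents_def)
  have "measure (\<mu> \<tau>) (space (\<mu> \<tau>)) = 1"
    using represents_real[OF rep continuous_on_const, of 1] assms(1) \<tau>
    by (simp add: unital_inj_star_hom_def traces_def trace_one)
  then show "prob_space (\<mu> \<tau>)"
    by (intro prob_spaceI) (simp add: emeasure_eq_measure)
next
  show "\<tau> \<in> traces sc st \<Longrightarrow> sets (\<mu> \<tau>) = sets borel" for \<tau>
    using assms(2) by (simp add: represents_def)
next
  fix g :: "'x \<Rightarrow> real" assume g: "continuous_on UNIV g"
  have "continuous_on (traces sc st) (\<lambda>\<tau>. Re (\<tau> (\<phi> (\<lambda>t. complex_of_real (g t)))))"
    by (intro continuous_intros continuous_on_product_then_coordinatewise continuous_on_id)
  then show "continuous_on (traces sc st) (\<lambda>\<tau>. integral\<^sup>L (\<mu> \<tau>) g)"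
    by (rule continuous_on_eq) (simp add: represents_real[OF assms(2)[rule_format] g])
qed

theorem lemma3p5:
  fixes sc :: "complex \<Rightarrow> 'a::{banach,real_normed_algebra_1} \<Rightarrow> 'a"
    and st :: "'a \<Rightarrow> 'a"
    and \<phi> :: "('x::metric_space \<Rightarrow> complex) \<Rightarrow> 'a"
    and \<mu> :: "('a \<Rightarrow> complex) \<Rightarrow> 'x measure"
    and G :: "'x set"
  assumes "compact (UNIV :: 'x set)"
    and "cstar_alg sc st"
    and "cstar_simple sc"
    and "unital_inj_star_hom sc st \<phi>"
    and "\<forall>\<tau>\<in>traces sc st. represents \<phi> \<tau> (\<mu> \<tau>)"
    and "open G"
    and "\<forall>\<tau>\<in>traces sc st. measure (\<mu> \<tau>) (closure G - G) = 0"
  shows "continuous_map (weakstar_traces sc st) euclidean (\<lambda>\<tau>. measure (\<mu> \<tau>) G) \<and>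
    (\<forall>\<epsilon>>0. \<exists>f :: 'x \<Rightarrow> real. continuous_on UNIV f \<and> (\<forall>t. 0 \<le> f t \<and> f t \<le> 1) \<and>
        (\<forall>t. t \<notin> G \<longrightarrow> f t = 0) \<and>
        (\<forall>\<tau>\<in>traces sc st. cmod (\<tau> (\<phi> (\<lambda>t. complex_of_real (f t))) - complex_of_real (measure (\<mu> \<tau>) G)) < \<epsilon>))"
proof -
  interpret cstar_algebra sc st
    by (rule cstar_algebra.intro) (rule assms(2))
  interpret weakly_continuous_family "traces sc st" \<mu>
    using assms(4,5) by (rule weakly_continuous_family_traces)
  have cont: "continuous_on (traces sc st) (\<lambda>\<tau>. measure (\<mu> \<tau>) G)"
    using assms(6,7) by (intro continuous_on_measure_null_boundary) auto
  show ?thesis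
    unfolding weakstar_traces_eq
  proof (intro conjI allI impI)
    show "continuous_map (top_of_set (traces sc st)) euclidean (\<lambda>\<tau>. measure (\<mu> \<tau>) G)"
      using cont by simp
    fix \<epsilon> :: real assume "0 < \<epsilon>"
    then obtain n where n: "\<And>\<tau>. \<tau> \<in> traces sc st \<Longrightarrow>
        measure (\<mu> \<tau>) G - integral\<^sup>L (\<mu> \<tau>) (open_cutoff G n) < \<epsilon>"
      using uniform_approx_open_cutoff[OF compact_traces assms(6) cont] by blast
    have "cmod (\<tau> (\<phi> (\<lambda>t. complex_of_real (open_cutoff G n t))) - of_real (measure (\<mu> \<tau>) G)) < \<epsilon>"
      if "\<tau> \<in> traces sc st" for \<tau>
      using n[OF that] integral_open_cutoff_le[OF that assms(6), of n]
      by (simp add: represents_real[OF assms(5)[rule_format, OF that] continuous_on_open_cutoff]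
          flip: of_real_diff)
    then show "\<exists>f :: 'x \<Rightarrow> real. continuous_on UNIV f \<and> (\<forall>t. 0 \<le> f t \<and> f t \<le> 1) \<and>
        (\<forall>t. t \<notin> G \<longrightarrow> f t = 0) \<and>
        (\<forall>\<tau>\<in>traces sc st. cmod (\<tau> (\<phi> (\<lambda>t. complex_of_real (f t))) - complex_of_real (measure (\<mu> \<tau>) G)) < \<epsilon>)"
      by (intro exI[of _ "open_cutoff G n"])
        (simp add: continuous_on_open_cutoff open_cutoff_nonneg open_cutoff_le_1 open_cutoff_eq_0)
  qed
qed

end
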